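(* Let $m\ge 1$ and $d=2^{2m}-1$. If there exists a $(2^{2m},m,p)$-QRA coding with $p>1/2$, then there exist vectors $\vec s_1,\dots,\vec s_{2^{2m}}\in\mathbb{R}^{d}$ and reals $c_1,\dots,c_{2^{2m}}$ such that for every $w\in\{0,1\}^{2^{2m}}$ the set $$D_w=\{\vec r\in\mathbb{R}^{d} : \vec r\cdot\vec s_i>c_i \text{ for all } i \text{ with } w_i=0,\ \vec r\cdot\vec s_i<c_i \text{ for all } i \text{ with } w_i=1\}$$ is nonempty (indeed it contains the Bloch vector of an $m$-qubit state). In other words, $\mathbb{R}^{2^{2m}-1}$ is divided into $2^{2^{2m}}$ distinct nonempty regions by the $2^{2m}$ hyperplanes $\{\vec r:\vec r\cdot\vec s_i=c_i\}$.
   Context: An $(n,m,p)$-quantum random access (QRA) coding is a map assigning to each $n$-bit string $x\in\{0,1\}^n$ an $m$-qubit state $\rho_x$ (a positive semidefinite trace-one operator on $\mathbb{C}^{2^m}$) such that for every $i\in\{1,\dots,n\}$ there is a POVM $E^i=\{E^i_0,E^i_1\}$ (i.e. $E^i_0,E^i_1$ are positive semidefinite Hermitian operators on $\mathbb{C}^{2^m}$ with $E^i_0+E^i_1=I$) satisfying $\mathrm{Tr}(E^i_{x_i}\rho_x)\ge p$ for all $x\in\{0,1\}^n$, where $x_i$ is the $i$-th bit of $x$. Bloch vectors of $N$-level states ($N=2^m$): fix Hermitian traceless matrices $\lambda_1,\dots,\lambda_{N^2-1}$ with $\mathrm{Tr}(\lambda_i\lambda_j)=2\delta_{ij}$; every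 $N\times N$ density matrix can be written uniquely as $\rho=\frac1N I_N+\frac12\sum_{k=1}^{N^2-1}r_k\lambda_k$ with $\vec r=(r_1,\dots,r_{N^2-1})\in\mathbb{R}^{N^2-1}$, the Bloch vector of $\rho$. *)

theory Defs
  imports "Jordan_Normal_Form.Matrix"
begin

definition hermitian_mat :: "nat \<Rightarrow> complex mat \<Rightarrow> bool" where
  "hermitian_mat N A \<longleftrightarrow> A \<in> carrier_mat N N \<and>
     (\<forall>i<N. \<forall>j<N. A $$ (i, j) = cnj (A $$ (j, i)))"

definition psd_mat :: "nat \<Rightarrow> complex mat \<Rightarrow> bool" where
  "psd_mat N A \<longleftrightarrow> hermitian_mat N A \<and>
     (\<forall>v \<in> carrier_vec N. 0 \<le> Re (conjugate v \<bullet> (A *\<^sub>v v)))"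

definition mat_trace :: "complex mat \<Rightarrow> complex" where
  "mat_trace A = (\<Sum>i < dim_row A. A $$ (i, i))"

definition density_mat :: "nat \<Rightarrow> complex mat \<Rightarrow> bool" where
  "density_mat N \<rho> \<longleftrightarrow> psd_mat N \<rho> \<and> mat_trace \<rho> = 1"

definition povm2 :: "nat \<Rightarrow> complex mat \<Rightarrow> complex mat \<Rightarrow> bool" where
  "povm2 N E0 E1 \<longleftrightarrow> psd_mat N E0 \<and> psd_mat N E1 \<and> E0 + E1 = 1\<^sub>m N"

text \<open>(n,m,p)-QRA coding: n-bit strings are bool lists of length n (True = bit 1),
  bits are indexed 0..n-1; states live on C^(2^m).\<close>
definition qra_coding :: "nat \<Rightarrow> nat \<Rightarrow> real \<Rightarrow> (bool list \<Rightarrow> complex mat) \<Rightarrow> bool" where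
  "qra_coding n m p \<rho> \<longleftrightarrow>
     (\<forall>x. length x = n \<longrightarrow> density_mat (2 ^ m) (\<rho> x)) \<and>
     (\<forall>i<n. \<exists>E0 E1. povm2 (2 ^ m) E0 E1 \<and>
        (\<forall>x. length x = n \<longrightarrow>
           p \<le> Re (mat_trace ((if x ! i then E1 else E0) * \<rho> x))))"

end

theory Submission imports Defs begin

(* A Hermitian N x N matrix R is determined by the N^2 reals Re R_jl + Im R_jl, since Re R is
   symmetric and Im R antisymmetric. In these coordinates Re tr(E R) is a linear form, and trace
   one eliminates the diagonal coordinate (N - 1, N - 1): on states, Re tr(E R) is an affine
   function of the remaining N^2 - 1 coordinates, which take over the role of the Bloch vector.
   For the POVM element E^i_0 decoding bit i this affine function is at least p > 1/2 at rho_w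
   when w_i = 0 and at most 1 - p < 1/2 when w_i = 1, so the hyperplanes where it equals 1/2
   separate all the states rho_w. *)

lemma bij_betw_div_mod:
  fixes M N :: nat
  shows "bij_betw (\<lambda>k. (k div N, k mod N)) {..<M * N} ({..<M} \<times> {..<N})"
proof (rule bij_betw_byWitness[where f' = "\<lambda>(j, l). j * N + l"])
  show "(\<lambda>k. (k div N, k mod N)) ` {..<M * N} \<subseteq> {..<M} \<times> {..<N}"
    by (auto simp: less_mult_imp_div_less intro!: mod_less_divisor Nat.gr0I)
  show "(\<lambda>(j, l). j * N + l) ` ({..<M} \<times> {..<N}) \<subseteq> {..<M * N}"
  proof clarsimp
    fix j l assume "j < M" "l < N"
    then have "(j + 1) * N \<le> M * N" by (intro mult_le_mono1) simp
    with \<open>l < N\<close> show "j * N + l < M * N" by simp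
  qed
qed auto

lemma sum_lessThan_mult_div_mod:
  fixes M N :: nat and g :: "nat \<Rightarrow> nat \<Rightarrow> 'a::comm_monoid_add"
  shows "(\<Sum>k<M * N. g (k div N) (k mod N)) = (\<Sum>j<M. \<Sum>l<N. g j l)"
  using sum.reindex_bij_betw[OF bij_betw_div_mod, of "\<lambda>(j, l). g j l" N M]
  by (simp add: sum.cartesian_product)

lemma hermitian_mat_carrier: "hermitian_mat N R \<Longrightarrow> R \<in> carrier_mat N N"
  unfolding hermitian_mat_def by blast

lemma hermitian_mat_entry:
  "hermitian_mat N R \<Longrightarrow> j < N \<Longrightarrow> l < N \<Longrightarrow> R $$ (j, l) = cnj (R $$ (l, j))"
  unfolding hermitian_mat_def by blast

lemma hermitian_mat_diag_real: "hermitian_mat N R \<Longrightarrow> j < N \<Longrightarrow> Im (R $$ (j, j)) = 0"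
  using hermitian_mat_entry[of N R j j] by (simp add: complex_eq_iff)

lemma density_mat_hermitian: "density_mat N R \<Longrightarrow> hermitian_mat N R"
  unfolding density_mat_def psd_mat_def by blast

lemma density_mat_carrier: "density_mat N R \<Longrightarrow> R \<in> carrier_mat N N"
  using density_mat_hermitian hermitian_mat_carrier by blast

lemma density_mat_trace: "density_mat N R \<Longrightarrow> mat_trace R = 1"
  unfolding density_mat_def by blast

lemma povm2_carrier:
  "povm2 N E0 E1 \<Longrightarrow> E0 \<in> carrier_mat N N \<and> E1 \<in> carrier_mat N N"
  unfolding povm2_def psd_mat_def using hermitian_mat_carrier by blast

lemma mat_trace_add:
  "A \<in> carrier_mat N N \<Longrightarrow> B \<in> carrier_mat N N \<Longrightarrow>
    mat_trace (A + B) = mat_trace A + mat_trace B"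
  unfolding mat_trace_def by (simp add: sum.distrib)

lemma mat_trace_mult:
  assumes "A \<in> carrier_mat N N" "B \<in> carrier_mat N N"
  shows "mat_trace (A * B) = (\<Sum>j<N. \<Sum>l<N. A $$ (j, l) * B $$ (l, j))"
  using assms unfolding mat_trace_def
  by (auto simp: scalar_prod_def lessThan_atLeast0 intro!: sum.cong)

lemma povm2_Re_trace_sum:
  assumes "povm2 N E0 E1" "density_mat N R"
  shows "Re (mat_trace (E0 * R)) + Re (mat_trace (E1 * R)) = 1"
proof -
  have E0: "E0 \<in> carrier_mat N N" and E1: "E1 \<in> carrier_mat N N"
    using povm2_carrier[OF assms(1)] by auto
  have R: "R \<in> carrier_mat N N" using density_mat_carrier[OF assms(2)] .
  have "mat_trace (E0 * R) + mat_trace (E1 * R) = mat_trace ((E0 + E1) * R)"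
    using E0 E1 R by (simp add: add_mult_distrib_mat mat_trace_add[of _ N])
  also have "\<dots> = 1"
    using assms R by (simp add: povm2_def density_mat_trace)
  finally have "mat_trace (E0 * R) + mat_trace (E1 * R) = 1" .
  from arg_cong[OF this, of Re] show ?thesis by simp
qed

definition herm_coord :: "complex mat \<Rightarrow> nat \<Rightarrow> nat \<Rightarrow> real" where
  "herm_coord R j l = Re (R $$ (j, l)) + Im (R $$ (j, l))"

definition trace_coeff :: "complex mat \<Rightarrow> nat \<Rightarrow> nat \<Rightarrow> real" where
  "trace_coeff E j l = (Re (E $$ (l, j)) - Im (E $$ (l, j)) + Re (E $$ (j, l)) + Im (E $$ (j, l))) / 2"

lemma Re_mult_hermitian_entry:
  assumes "hermitian_mat N R" "j < N" "l < N"
  shows "Re (E $$ (j, l) * R $$ (l, j)) =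
    herm_coord R j l * (Re (E $$ (j, l)) + Im (E $$ (j, l))) / 2 +
    herm_coord R l j * (Re (E $$ (j, l)) - Im (E $$ (j, l))) / 2"
  using hermitian_mat_entry[OF assms]
  by (simp add: herm_coord_def algebra_simps add_divide_distrib diff_divide_distrib)

lemma Re_trace_mult_hermitian:
  assumes "hermitian_mat N R" "E \<in> carrier_mat N N"
  shows "Re (mat_trace (E * R)) = (\<Sum>j<N. \<Sum>l<N. herm_coord R j l * trace_coeff E j l)"
proof -
  define a where "a j l = herm_coord R j l * (Re (E $$ (j, l)) + Im (E $$ (j, l))) / 2" for j l
  define b where "b j l = herm_coord R l j * (Re (E $$ (j, l)) - Im (E $$ (j, l))) / 2" for j l
  have "Re (mat_trace (E * R)) = (\<Sum>j<N. \<Sum>l<N. a j l + b j l)"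
    unfolding mat_trace_mult[OF assms(2) hermitian_mat_carrier[OF assms(1)]] Re_sum a_def b_def
    by (intro sum.cong refl Re_mult_hermitian_entry[OF assms(1)]) simp_all
  also have "\<dots> = (\<Sum>j<N. \<Sum>l<N. a j l) + (\<Sum>j<N. \<Sum>l<N. b l j)"
    by (simp add: sum.distrib sum.swap[of b])
  also have "\<dots> = (\<Sum>j<N. \<Sum>l<N. herm_coord R j l * trace_coeff E j l)"
    by (simp add: sum.distrib[symmetric] a_def b_def trace_coeff_def algebra_simps
        add_divide_distrib diff_divide_distrib)
  finally show ?thesis .
qed

lemma density_mat_diag_coord_sum:
  assumes "density_mat N R"
  shows "(\<Sum>j<N. herm_coord R j j) = 1"
proof -
  have "(\<Sum>j<N. herm_coord R j j) = Re (mat_trace R)"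
    using density_mat_carrier[OF assms]
    by (simp add: herm_coord_def mat_trace_def Re_sum
        hermitian_mat_diag_real[OF density_mat_hermitian[OF assms]])
  then show ?thesis by (simp add: density_mat_trace[OF assms])
qed

lemma sum_lessThan_Suc_eliminate:
  fixes D Q T :: "nat \<Rightarrow> 'a::comm_ring_1"
  assumes "(\<Sum>k<Suc L. D k * Q k) = 1" "D L = 1"
  shows "(\<Sum>k<Suc L. Q k * T k) = (\<Sum>k<L. Q k * (T k - T L * D k)) + T L"
proof -
  have Q_L: "Q L + (\<Sum>k<L. D k * Q k) = 1" using assms by (simp add: add.commute)
  have "(\<Sum>k<L. Q k * (T k - T L * D k)) + T L
      = (\<Sum>k<L. Q k * T k) + T L * (1 - (\<Sum>k<L. D k * Q k))"
    by (simp add: algebra_simps sum_subtractf sum_distrib_left)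
  also have "\<dots> = (\<Sum>k<Suc L. Q k * T k)"
    by (simp flip: Q_L add: algebra_simps)
  finally show ?thesis ..
qed

definition state_coord :: "nat \<Rightarrow> complex mat \<Rightarrow> nat \<Rightarrow> real" where
  "state_coord N R k = herm_coord R (k div N) (k mod N)"

lemma Re_trace_affine_in_state_coord:
  assumes "E \<in> carrier_mat N N" "0 < N"
  shows "\<exists>s c. \<forall>R. density_mat N R \<longrightarrow>
    Re (mat_trace (E * R)) = (\<Sum>k<N * N - 1. state_coord N R k * s k) + c"
proof -
  define L where "L = N * N - 1"
  have SL: "N * N = Suc L" unfolding L_def using assms(2) by simp
  have L_div_mod: "L div N = N - 1" "L mod N = N - 1"
  proof -
    have L: "L = (N - 1) + (N - 1) * N" unfolding L_def using assms(2) by (cases N) simp_all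
    show "L div N = N - 1" "L mod N = N - 1"
      unfolding L using assms(2) by (simp_all only: div_mult_self1 mod_mult_self1) simp_all
  qed
  define D :: "nat \<Rightarrow> real" where "D k = (if k div N = k mod N then 1 else 0)" for k
  define T where "T k = trace_coeff E (k div N) (k mod N)" for k
  have "Re (mat_trace (E * R)) = (\<Sum>k<L. state_coord N R k * (T k - T L * D k)) + T L"
    if R: "density_mat N R" for R
  proof -
    have "(\<Sum>k<Suc L. D k * state_coord N R k) =
        (\<Sum>j<N. \<Sum>l<N. if j = l then herm_coord R j l else 0)"
      unfolding SL[symmetric]
        sum_lessThan_mult_div_mod[of "\<lambda>j l. if j = l then herm_coord R j l else 0", symmetric]
      by (rule sum.cong) (auto simp: D_def state_coord_def)
    also have "\<dots> = 1" using density_mat_diag_coord_sum[OF R] by simp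
    finally have trace_one: "(\<Sum>k<Suc L. D k * state_coord N R k) = 1" .
    have D_L: "D L = 1" by (simp add: D_def L_div_mod)
    have "Re (mat_trace (E * R)) = (\<Sum>k<Suc L. state_coord N R k * T k)"
      using Re_trace_mult_hermitian[OF density_mat_hermitian[OF R] assms(1)]
        sum_lessThan_mult_div_mod[of "\<lambda>j l. herm_coord R j l * trace_coeff E j l" N N]
      by (simp add: SL state_coord_def T_def)
    also have "\<dots> = (\<Sum>k<L. state_coord N R k * (T k - T L * D k)) + T L"
      by (rule sum_lessThan_Suc_eliminate[OF trace_one D_L])
    finally show ?thesis .
  qed
  then show ?thesis
    by (intro exI[of _ "\<lambda>k. T k - T L * D k"] exI[of _ "T L"]) (simp add: L_def)
qed

lemma qra_coding_density:
  "qra_coding n m p \<rho> \<Longrightarrow> length x = n \<Longrightarrow> density_mat (2 ^ m) (\<rho> x)"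
  unfolding qra_coding_def by blast

lemma qra_coding_decision_operators:
  assumes "qra_coding n m p \<rho>" "1 / 2 < p"
  obtains E where "\<And>i. i < n \<Longrightarrow> E i \<in> carrier_mat (2 ^ m) (2 ^ m)"
    and "\<And>i x. i < n \<Longrightarrow> length x = n \<Longrightarrow> \<not> x ! i \<Longrightarrow>
      1 / 2 < Re (mat_trace (E i * \<rho> x))"
    and "\<And>i x. i < n \<Longrightarrow> length x = n \<Longrightarrow> x ! i \<Longrightarrow>
      Re (mat_trace (E i * \<rho> x)) < 1 / 2"
proof -
  have "\<exists>E0. E0 \<in> carrier_mat (2 ^ m) (2 ^ m) \<and> (\<forall>x. length x = n \<longrightarrow>
      (\<not> x ! i \<longrightarrow> 1 / 2 < Re (mat_trace (E0 * \<rho> x))) \<and>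
      (x ! i \<longrightarrow> Re (mat_trace (E0 * \<rho> x)) < 1 / 2))" if "i < n" for i
  proof -
    obtain E0 E1 where povm: "povm2 (2 ^ m) E0 E1" and succ: "\<And>x. length x = n \<Longrightarrow>
        p \<le> Re (mat_trace ((if x ! i then E1 else E0) * \<rho> x))"
      using assms(1) \<open>i < n\<close> unfolding qra_coding_def by blast
    show ?thesis
    proof (intro exI[of _ E0] conjI allI impI)
      show "E0 \<in> carrier_mat (2 ^ m) (2 ^ m)" using povm2_carrier[OF povm] by blast
      fix x :: "bool list" assume x: "length x = n"
      have "Re (mat_trace (E0 * \<rho> x)) + Re (mat_trace (E1 * \<rho> x)) = 1"
        using povm2_Re_trace_sum[OF povm qra_coding_density[OF assms(1) x]] .
      then show "\<not> x ! i \<Longrightarrow> 1 / 2 < Re (mat_trace (E0 * \<rho> x))"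
        and "x ! i \<Longrightarrow> Re (mat_trace (E0 * \<rho> x)) < 1 / 2"
        using succ[OF x] assms(2) by auto
    qed
  qed
  then show ?thesis using that by metis
qed

lemma qra_coding_separating_hyperplanes:
  fixes m :: nat and p :: real and \<rho> :: "bool list \<Rightarrow> complex mat"
  defines "N \<equiv> 2 ^ m :: nat"
  assumes "qra_coding n m p \<rho>" "1 / 2 < p"
  obtains s c where
    "\<And>x i. length x = n \<Longrightarrow> i < n \<Longrightarrow> \<not> x ! i \<Longrightarrow>
      c i < (\<Sum>k<N * N - 1. state_coord N (\<rho> x) k * s i k)"
    "\<And>x i. length x = n \<Longrightarrow> i < n \<Longrightarrow> x ! i \<Longrightarrow>
      (\<Sum>k<N * N - 1. state_coord N (\<rho> x) k * s i k) < c i"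
proof -
  obtain E where E: "\<And>i. i < n \<Longrightarrow> E i \<in> carrier_mat N N"
    and E0: "\<And>i x. i < n \<Longrightarrow> length x = n \<Longrightarrow> \<not> x ! i \<Longrightarrow>
      1 / 2 < Re (mat_trace (E i * \<rho> x))"
    and E1: "\<And>i x. i < n \<Longrightarrow> length x = n \<Longrightarrow> x ! i \<Longrightarrow>
      Re (mat_trace (E i * \<rho> x)) < 1 / 2"
    using qra_coding_decision_operators[OF assms(2,3)] unfolding N_def by blast
  have "\<forall>i. \<exists>s c. i < n \<longrightarrow> (\<forall>R. density_mat N R \<longrightarrow>
      Re (mat_trace (E i * R)) = (\<Sum>k<N * N - 1. state_coord N R k * s k) + c)"
    using Re_trace_affine_in_state_coord[OF E] unfolding N_def by simp
  then obtain s c where affine: "\<And>i R. i < n \<Longrightarrow> density_mat N R \<Longrightarrow>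
      Re (mat_trace (E i * R)) = (\<Sum>k<N * N - 1. state_coord N R k * s i k) + c i"
    by metis
  show ?thesis
  proof (rule that[of "\<lambda>i. 1 / 2 - c i" s])
    fix x :: "bool list" and i :: nat
    assume x: "length x = n" and i: "i < n"
    note Re_trace_eq = affine[OF i qra_coding_density[OF assms(2) x, folded N_def]]
    show "\<not> x ! i \<Longrightarrow> 1 / 2 - c i < (\<Sum>k<N * N - 1. state_coord N (\<rho> x) k * s i k)"
      using Re_trace_eq E0[OF i x] by linarith
    show "x ! i \<Longrightarrow> (\<Sum>k<N * N - 1. state_coord N (\<rho> x) k * s i k) < 1 / 2 - c i"
      using Re_trace_eq E1[OF i x] by linarith
  qed
qed

theorem lemma3:
  fixes m :: nat and p :: real
  assumes "m \<ge> 1"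
    and "\<exists>\<rho>. qra_coding (2 ^ (2 * m)) m p \<rho>"
    and "p > 1 / 2"
  shows "\<exists>(s :: nat \<Rightarrow> nat \<Rightarrow> real) (c :: nat \<Rightarrow> real).
     \<forall>w :: bool list. length w = 2 ^ (2 * m) \<longrightarrow>
       (\<exists>r :: nat \<Rightarrow> real. \<forall>i < 2 ^ (2 * m).
          (\<not> w ! i \<longrightarrow> (\<Sum>k < 2 ^ (2 * m) - 1. r k * s i k) > c i) \<and>
          (w ! i \<longrightarrow> (\<Sum>k < 2 ^ (2 * m) - 1. r k * s i k) < c i))"
proof -
  define N :: nat where "N = 2 ^ m"
  have n: "2 ^ (2 * m) = N * N" unfolding N_def by (simp add: mult_2 power_add)
  obtain \<rho> where \<rho>: "qra_coding (N * N) m p \<rho>" using assms(2) n by auto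
  obtain c s where
    above: "\<And>w i. length w = N * N \<Longrightarrow> i < N * N \<Longrightarrow> \<not> w ! i \<Longrightarrow>
      c i < (\<Sum>k<N * N - 1. state_coord N (\<rho> w) k * s i k)" and
    below: "\<And>w i. length w = N * N \<Longrightarrow> i < N * N \<Longrightarrow> w ! i \<Longrightarrow>
      (\<Sum>k<N * N - 1. state_coord N (\<rho> w) k * s i k) < c i"
    by (rule qra_coding_separating_hyperplanes[OF \<rho> assms(3), folded N_def]) iprover
  show ?thesis unfolding n
  proof (rule exI[of _ s], rule exI[of _ c], intro allI impI)
    fix w :: "bool list" assume w: "length w = N * N"
    show "\<exists>r. \<forall>i < N * N.
        (\<not> w ! i \<longrightarrow> (\<Sum>k < N * N - 1. r k * s i k) > c i) \<and>
        (w ! i \<longrightarrow> (\<Sum>k < N * N - 1. r k * s i k) < c i)"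
      using above[OF w] below[OF w] by (intro exI[of _ "state_coord N (\<rho> w)"]) simp
  qed
qed

end
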